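(* Let $X$ be a $T_0$ space, $U$ an $SI_2$-open subset of $X$, $x\in X$, and let $\mathcal F$ be a family of sets of the form $\uparrow F$ with $F$ a nonempty finite subset of $X$, such that $\mathcal F$ is an irreducible subset of $P_S(X)$. If $\bigcap\mathcal F\subseteq\uparrow x\subseteq U$, then $F\subseteq U$ for some $\uparrow F\in\mathcal F$.
   Context: For a $T_0$ space $X$, the specialization order is $x\le y$ iff $x\in \mathrm{cl}\{y\}$; $\uparrow A=\{x: a\le x\text{ for some } a\in A\}$, $\uparrow x=\uparrow\{x\}$. $A^\uparrow$ and $A^\downarrow$ are the sets of upper and lower bounds of $A$, and $A^\delta=(A^\uparrow)^\downarrow$. A nonempty $A\subseteq X$ is irreducible if whenever $A\subseteq F_1\cup F_2$ with $F_1,F_2$ closed, $A\subseteq F_1$ or $A\subseteq F_2$. $P_S(X)$ is the set of nonempty compact saturated (upper) subsets of $X$ with the upper Vietoris topology, having basis $\{\square V: V \text{ open}\}$, $\square V=\{Q: Q\subseteq V\}$ (for finite $F$, $\uparrow F$ is such a set). A subset $U\subseteq X$ is $SI_2$-open if $U$ is open and for every irreducible $F\subseteq X$, $F^\delta\cap U\neq\emptyset$ implies $F\cap U\ne\emptyset$. *)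

theory Defs
  imports "HOL-Analysis.Analysis"
begin

definition spec_le :: "'a topology \<Rightarrow> 'a \<Rightarrow> 'a \<Rightarrow> bool" where
  "spec_le X x y \<longleftrightarrow> x \<in> topspace X \<and> y \<in> topspace X \<and> x \<in> X closure_of {y}"

definition up_set :: "'a topology \<Rightarrow> 'a set \<Rightarrow> 'a set" where
  "up_set X A = {x \<in> topspace X. \<exists>a\<in>A. spec_le X a x}"

definition upper_bounds :: "'a topology \<Rightarrow> 'a set \<Rightarrow> 'a set" where
  "upper_bounds X A = {u \<in> topspace X. \<forall>a\<in>A. spec_le X a u}"

definition lower_bounds :: "'a topology \<Rightarrow> 'a set \<Rightarrow> 'a set" where
  "lower_bounds X A = {l \<in> topspace X. \<forall>a\<in>A. spec_le X l a}"

definition cut_delta :: "'a topology \<Rightarrow> 'a set \<Rightarrow> 'a set" where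
  "cut_delta X A = lower_bounds X (upper_bounds X A)"

definition irreducible_in :: "'a topology \<Rightarrow> 'a set \<Rightarrow> bool" where
  "irreducible_in X A \<longleftrightarrow> A \<noteq> {} \<and> A \<subseteq> topspace X \<and>
     (\<forall>F1 F2. closedin X F1 \<and> closedin X F2 \<and> A \<subseteq> F1 \<union> F2 \<longrightarrow> A \<subseteq> F1 \<or> A \<subseteq> F2)"

definition SI2_open :: "'a topology \<Rightarrow> 'a set \<Rightarrow> bool" where
  "SI2_open X U \<longleftrightarrow> openin X U \<and>
     (\<forall>F. irreducible_in X F \<longrightarrow> cut_delta X F \<inter> U \<noteq> {} \<longrightarrow> F \<inter> U \<noteq> {})"

definition QS :: "'a topology \<Rightarrow> 'a set set" where
  "QS X = {Q. Q \<noteq> {} \<and> compactin X Q \<and> up_set X Q = Q}"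

definition box_set :: "'a topology \<Rightarrow> 'a set \<Rightarrow> 'a set set" where
  "box_set X V = {Q \<in> QS X. Q \<subseteq> V}"

definition smyth_space :: "'a topology \<Rightarrow> 'a set topology" where
  "smyth_space X = topology_generated_by {box_set X V | V. openin X V}"

end

theory Submission
  imports Defs
begin

text \<open>
  Suppose no member of \<open>\<F>\<close> lies in \<open>U\<close>. Then the closed set \<open>X - U\<close> meets every member
  of \<open>\<F>\<close>, and by Zorn's lemma and compactness it contains a minimal closed set \<open>C\<close> meeting
  every member (Rudin's lemma). Irreducibility of \<open>\<F>\<close> in the Smyth power space makes \<open>C\<close>
  irreducible. Every upper bound of \<open>C\<close> lies in each saturated member of \<open>\<F>\<close>, hence in
  \<open>\<Inter>\<F> \<subseteq> \<up>x\<close>, so \<open>x \<in> C\<^sup>\<delta> \<inter> U\<close>, and \<open>SI\<^sub>2\<close>-openness yields \<open>C \<inter> U \<noteq> {}\<close>: a contradiction.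
\<close>

definition minimal_closed_transversal :: "'a topology \<Rightarrow> 'a set set \<Rightarrow> 'a set \<Rightarrow> bool" where
  "minimal_closed_transversal X \<F> C \<longleftrightarrow> closedin X C \<and> (\<forall>Q\<in>\<F>. C \<inter> Q \<noteq> {}) \<and>
     (\<forall>B. closedin X B \<and> B \<subset> C \<longrightarrow> (\<exists>Q\<in>\<F>. B \<inter> Q = {}))"

lemma spec_le_refl: "a \<in> topspace X \<Longrightarrow> spec_le X a a"
  unfolding spec_le_def by (simp add: closure_of_eq_empty_gen in_closure_of)

lemma subset_up_set: "F \<subseteq> topspace X \<Longrightarrow> F \<subseteq> up_set X F"
  unfolding up_set_def by (auto intro: spec_le_refl)

lemma topspace_smyth_space: "topspace (smyth_space X) = QS X"
proof -
  have "box_set X (topspace X) = QS X"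
    unfolding box_set_def QS_def using compactin_subset_topspace by blast
  then show ?thesis
    unfolding smyth_space_def topology_generated_by_topspace box_set_def by auto
qed

lemma QS_subset_topspace: "Q \<in> QS X \<Longrightarrow> Q \<subseteq> topspace X"
  unfolding QS_def using compactin_subset_topspace by blast

lemma closedin_smyth_space_hitting:
  assumes "closedin X B"
  shows "closedin (smyth_space X) {Q \<in> QS X. B \<inter> Q \<noteq> {}}"
proof -
  have "openin (smyth_space X) (box_set X (topspace X - B))"
    unfolding smyth_space_def using assms by (intro topology_generated_by_Basis) blast
  then have "closedin (smyth_space X) (QS X - box_set X (topspace X - B))"
    by (metis closedin_diff closedin_topspace topspace_smyth_space)
  moreover have "QS X - box_set X (topspace X - B) = {Q \<in> QS X. B \<inter> Q \<noteq> {}}"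
    using closedin_subset[OF assms] QS_subset_topspace unfolding box_set_def by blast
  ultimately show ?thesis by simp
qed

lemma irreducible_in_smyth_space_subset_QS:
  "irreducible_in (smyth_space X) \<F> \<Longrightarrow> \<F> \<subseteq> QS X"
  unfolding irreducible_in_def topspace_smyth_space by blast

lemma minimal_closed_transversal_exists:
  assumes "\<F> \<subseteq> QS X" and "closedin X A" and "\<forall>Q\<in>\<F>. A \<inter> Q \<noteq> {}"
  obtains C where "C \<subseteq> A" and "minimal_closed_transversal X \<F> C"
proof -
  \<comment> \<open>Zorn's lemma is applied to the complements; compactness keeps unions of chains in \<open>\<W>\<close>.\<close>
  define \<W> where "\<W> = {W. openin X W \<and> topspace X - A \<subseteq> W \<and> (\<forall>Q\<in>\<F>. \<not> Q \<subseteq> W)}"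
  have "topspace X - A \<in> \<W>"
    using assms unfolding \<W>_def by blast
  moreover have "\<Union>\<C> \<in> \<W>" if "\<C> \<noteq> {}" and chain: "subset.chain \<W> \<C>" for \<C>
  proof -
    have "\<C> \<subseteq> \<W>"
      using chain by (simp add: subset_chain_def)
    then have open_\<C>: "\<forall>W\<in>\<C>. openin X W"
      unfolding \<W>_def by blast
    have "\<not> Q \<subseteq> \<Union>\<C>" if "Q \<in> \<F>" for Q
    proof
      assume "Q \<subseteq> \<Union>\<C>"
      have "compactin X Q" "Q \<noteq> {}"
        using \<open>Q \<in> \<F>\<close> assms(1) unfolding QS_def by blast+
      then obtain \<G> where "finite \<G>" "\<G> \<subseteq> \<C>" "Q \<subseteq> \<Union>\<G>"
        using \<open>Q \<subseteq> \<Union>\<C>\<close> open_\<C> unfolding compactin_def by blast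
      moreover have "subset.chain \<W> \<G>"
        using chain \<open>\<G> \<subseteq> \<C>\<close> unfolding subset_chain_def by (meson subset_iff)
      moreover have "\<G> \<noteq> {}"
        using \<open>Q \<noteq> {}\<close> \<open>Q \<subseteq> \<Union>\<G>\<close> by blast
      ultimately have "\<Union>\<G> \<in> \<W>"
        using Union_in_chain[of \<G> \<W>] \<open>\<C> \<subseteq> \<W>\<close> by blast
      then show False
        using \<open>Q \<subseteq> \<Union>\<G>\<close> \<open>Q \<in> \<F>\<close> unfolding \<W>_def by blast
    qed
    moreover have "topspace X - A \<subseteq> \<Union>\<C>"
      using \<open>\<C> \<noteq> {}\<close> \<open>\<C> \<subseteq> \<W>\<close> unfolding \<W>_def by blast
    ultimately show ?thesis
      using open_\<C> unfolding \<W>_def by blast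
  qed
  ultimately obtain M where "M \<in> \<W>" and M_max: "\<And>W. W \<in> \<W> \<Longrightarrow> M \<subseteq> W \<Longrightarrow> W = M"
    using subset_Zorn_nonempty[of \<W>] by blast
  have M: "openin X M" "topspace X - A \<subseteq> M" "\<And>Q. Q \<in> \<F> \<Longrightarrow> \<not> Q \<subseteq> M"
    using \<open>M \<in> \<W>\<close> unfolding \<W>_def by auto
  have minimal: "\<exists>Q\<in>\<F>. B \<inter> Q = {}" if "closedin X B" and "B \<subset> topspace X - M" for B
  proof (rule ccontr)
    assume "\<not> (\<exists>Q\<in>\<F>. B \<inter> Q = {})"
    then have "topspace X - B \<in> \<W>"
      using that M(2) unfolding \<W>_def by blast
    moreover have "M \<subseteq> topspace X - B"
      using that(2) openin_subset[OF M(1)] by blast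
    ultimately have "topspace X - B = M"
      using M_max by blast
    then show False
      using that closedin_subset by blast
  qed
  have "\<forall>Q\<in>\<F>. (topspace X - M) \<inter> Q \<noteq> {}"
    using M(3) assms(1) QS_subset_topspace by blast
  then have "minimal_closed_transversal X \<F> (topspace X - M)"
    unfolding minimal_closed_transversal_def using M(1) minimal by blast
  moreover have "topspace X - M \<subseteq> A"
    using M(2) by blast
  ultimately show ?thesis
    using that by blast
qed

lemma minimal_closed_transversal_irreducible:
  assumes irr: "irreducible_in (smyth_space X) \<F>" and C: "minimal_closed_transversal X \<F> C"
  shows "irreducible_in X C"
proof -
  have "closedin X C" and hits: "\<And>Q. Q \<in> \<F> \<Longrightarrow> C \<inter> Q \<noteq> {}"
    using C unfolding minimal_closed_transversal_def by auto
  have "\<F> \<noteq> {}"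
    using irr unfolding irreducible_in_def by blast
  then have "C \<noteq> {}"
    using hits by blast
  let ?hitting = "\<lambda>F. {Q \<in> QS X. C \<inter> F \<inter> Q \<noteq> {}}"
  have absorbs: "C \<subseteq> F" if "closedin X F" and "\<F> \<subseteq> ?hitting F" for F
  proof (rule ccontr)
    assume "\<not> C \<subseteq> F"
    then have "C \<inter> F \<subset> C"
      by blast
    moreover have "closedin X (C \<inter> F)"
      using \<open>closedin X C\<close> that(1) by blast
    ultimately obtain Q where "Q \<in> \<F>" "C \<inter> F \<inter> Q = {}"
      using C unfolding minimal_closed_transversal_def by blast
    then show False
      using that(2) by blast
  qed
  have splits: "\<F> \<subseteq> ?hitting F1 \<or> \<F> \<subseteq> ?hitting F2"
    if "closedin X F1" "closedin X F2" "C \<subseteq> F1 \<union> F2" for F1 F2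
  proof -
    have "closedin (smyth_space X) (?hitting F1)" "closedin (smyth_space X) (?hitting F2)"
      using closedin_smyth_space_hitting \<open>closedin X C\<close> that(1,2) by blast+
    moreover have "\<F> \<subseteq> ?hitting F1 \<union> ?hitting F2"
      using hits that(3) irreducible_in_smyth_space_subset_QS[OF irr] by blast
    ultimately show ?thesis
      using irr unfolding irreducible_in_def by blast
  qed
  show ?thesis
    unfolding irreducible_in_def
  proof (intro conjI allI impI)
    show "C \<noteq> {}" "C \<subseteq> topspace X"
      using \<open>C \<noteq> {}\<close> closedin_subset[OF \<open>closedin X C\<close>] by auto
    fix F1 F2
    assume "closedin X F1 \<and> closedin X F2 \<and> C \<subseteq> F1 \<union> F2"
    then show "C \<subseteq> F1 \<or> C \<subseteq> F2"
      using splits absorbs by meson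
  qed
qed

lemma upper_bounds_subset_Inter:
  assumes "\<F> \<subseteq> QS X" and "\<forall>Q\<in>\<F>. C \<inter> Q \<noteq> {}"
  shows "upper_bounds X C \<subseteq> \<Inter>\<F>"
proof
  fix u assume u: "u \<in> upper_bounds X C"
  have "u \<in> up_set X Q" if "Q \<in> \<F>" for Q
    using u assms(2) that unfolding upper_bounds_def up_set_def by blast
  moreover have "up_set X Q = Q" if "Q \<in> \<F>" for Q
    using assms(1) that unfolding QS_def by blast
  ultimately show "u \<in> \<Inter>\<F>" by simp
qed

theorem SI2_open_contains_member_of_irreducible:
  assumes U: "SI2_open X U" and irr: "irreducible_in (smyth_space X) \<F>"
    and x: "x \<in> topspace X" and "\<Inter>\<F> \<subseteq> up_set X {x}" and "up_set X {x} \<subseteq> U"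
  shows "\<exists>Q\<in>\<F>. Q \<subseteq> U"
proof (rule ccontr)
  assume "\<not> (\<exists>Q\<in>\<F>. Q \<subseteq> U)"
  moreover have QS: "\<F> \<subseteq> QS X"
    using irr by (rule irreducible_in_smyth_space_subset_QS)
  ultimately have "\<forall>Q\<in>\<F>. (topspace X - U) \<inter> Q \<noteq> {}"
    using QS_subset_topspace by blast
  moreover have "closedin X (topspace X - U)"
    using U unfolding SI2_open_def by blast
  ultimately obtain C where "C \<subseteq> topspace X - U" and C: "minimal_closed_transversal X \<F> C"
    using minimal_closed_transversal_exists[OF QS] by blast
  have hits: "\<forall>Q\<in>\<F>. C \<inter> Q \<noteq> {}"
    using C unfolding minimal_closed_transversal_def by blast
  have "upper_bounds X C \<subseteq> up_set X {x}"
    using upper_bounds_subset_Inter[OF QS hits] assms(4) by (rule order_trans)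
  then have "x \<in> cut_delta X C"
    using x unfolding cut_delta_def lower_bounds_def up_set_def by blast
  moreover have "x \<in> U"
    using x assms(5) unfolding up_set_def by (auto intro: spec_le_refl)
  moreover have "irreducible_in X C"
    using irr C by (rule minimal_closed_transversal_irreducible)
  ultimately have "C \<inter> U \<noteq> {}"
    using U unfolding SI2_open_def by blast
  then show False
    using \<open>C \<subseteq> topspace X - U\<close> by blast
qed

theorem proposition2p9:
  fixes X :: "'a topology" and U :: "'a set" and x :: 'a and \<F> :: "'a set set"
  assumes "t0_space X"
    and "SI2_open X U"
    and "x \<in> topspace X"
    and "\<forall>A\<in>\<F>. \<exists>F. finite F \<and> F \<noteq> {} \<and> F \<subseteq> topspace X \<and> A = up_set X F"
    and "irreducible_in (smyth_space X) \<F>"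
    and "\<Inter>\<F> \<subseteq> up_set X {x}"
    and "up_set X {x} \<subseteq> U"
  shows "\<exists>F. finite F \<and> F \<noteq> {} \<and> F \<subseteq> topspace X \<and> up_set X F \<in> \<F> \<and> F \<subseteq> U"
proof -
  obtain Q where "Q \<in> \<F>" and "Q \<subseteq> U"
    using SI2_open_contains_member_of_irreducible[OF assms(2,5,3,6,7)] by blast
  obtain F where F: "finite F" "F \<noteq> {}" "F \<subseteq> topspace X" and "Q = up_set X F"
    using assms(4) \<open>Q \<in> \<F>\<close> by meson
  moreover have "F \<subseteq> U"
    using subset_up_set[OF F(3)] \<open>Q = up_set X F\<close> \<open>Q \<subseteq> U\<close> by (metis order_trans)
  ultimately show ?thesis
    using \<open>Q \<in> \<F>\<close> by auto
qed

end
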